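(* Let $(d_1,d_2)\in\mathbb N^2$, let $(a,b)\in\mathbb N^2$ be coprime and $k\ge1$ an integer, with $b>0$ and $d_2>0$. If \[ \frac{kab+1}{kb^2}\ge\frac{d_1}{d_2}>\frac ab\qquad\text{or}\qquad\frac{ka^2}{kab+1}\le\frac{d_1}{d_2}<\frac ab, \] then $(d_1,d_2)$ and $(ka,kb)$ satisfy the one-bending property.
   Context: Rank-2 scattering diagram: $\Bbbk$ a field of characteristic $0$, $M=\mathbb Z^2$ with basis $e_1,e_2$, $N=\operatorname{Hom}(M,\mathbb Z)$; positive integers $\ell_1,\ell_2$; independent variables $p_{i,k}$ ($i=1,2$, $1\le k\le\ell_i$); $\mathcal M$ the monoid of monomials in them; $\widehat R$ the completion of $\Bbbk[\mathcal M][x^{\pm1},y^{\pm1}]$ at the ideal generated by the $p_{i,k}$; $x^{(m_1,m_2)}=x^{m_1}y^{m_2}$. Walls: rays $b-\mathbb R_{\ge0}m_0$ or lines $b-\mathbb Rm_0$ ($m_0$ primitive) with functions $1+\sum_{k\ge1}c_kx^{km_0}$, $c_k$ in that ideal; crossing with velocity $v$ acts by $x^m\mapsto x^mf^{\langle n,m\rangle}$ ($n\in N$ primitive orthogonal to the wall, $\langle n,v\rangle<0$); consistency: trivial path-ordered products around regular loops. $\mathfrak D=\operatorname{Scat}(P_1,P_2)$, $P_1=1+\sum_{k=1}^{\ell_1}p_{1,k}x^k$, $P_2=1+\sum_{k=1}^{\ell_2}p_{2,k}y^k$: the consistent diagram (unique up to equivalence) consisting of the lines $(\mathbb Re_1,P_1)$,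 $(\mathbb Re_2,P_2)$ and rays, chosen with rays $\mathbb R_{\le0}(a,b)$ for distinct coprime $(a,b)\in\mathbb Z_{>0}^2$. A broken line for $m_0\in M\setminus\{0\}$ with endpoint $Q$ is a continuous piecewise linear $\beta:(-\infty,0]\to\mathbb R^2$ avoiding ray endpoints and wall intersection points, with breakpoints $\tau_1<\dots<\tau_\ell<0$ and monomials $c_ix^{m_i}$ on the linear pieces, $c_0=1$, $\beta(0)=Q$, $\dot\beta=-m_i$ on the $i$-th piece, transversal crossing at breakpoints, and $c_ix^{m_i}$ a term different from $c_{i-1}x^{m_{i-1}}$ of $c_{i-1}x^{m_{i-1}}\prod_{\mathfrak d\ni\beta(\tau_i)}f_{\mathfrak d}^{\langle n,m_{i-1}\rangle}$ ($n$ primitive normal with $\langle n,m_{i-1}\rangle>0$); it bends at the $\beta(\tau_i)$, its initial exponent is $m_0$ and final exponent $m_\ell$. One-bending property: for $(d_1,d_2)\in\mathbb N^2$, coprime $(a,b)\in\mathbb N^2$ with $d_1b-d_2a\ne0$ and $k\ge1$, $(d_1,d_2)$ and $(ka,kb)$ satisfy the one-bending property if every broken line in $\mathfrak D$ with initial exponent $(-d_1,-d_2)$, final exponent $(ka-d_1,kb-d_2)$, and no bend on the positive $x$-axis or positive $y$-axis, has exactly one bend. *)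

theory Defs
  imports "HOL-Analysis.Analysis"
begin

text \<open>The variables p_(i,j) are indexed by pairs (i,j) with i = 1, 1 <= j <= l1 or
  i = 2, 1 <= j <= l2.  A monomial in the p's (an element of the monoid M) is an
  exponent function alpha :: nat * nat => nat vanishing outside this index set.
  An element of the completed ring R^ (completion of k[M][x^+-1,y^+-1] at the
  ideal I generated by the p's) is represented by its coefficient function
  g alpha m = coefficient of p^alpha x^m, subject to: zero outside the admissible
  p-exponents, and for each alpha only finitely many m with nonzero coefficient.\<close>

type_synonym pexp = "nat \<times> nat \<Rightarrow> nat"
type_synonym 'k ser = "pexp \<Rightarrow> int \<times> int \<Rightarrow> 'k"

definition pidx :: "nat \<Rightarrow> nat \<Rightarrow> (nat \<times> nat) set" where
  "pidx l1 l2 = {(i, j). (i = 1 \<and> 1 \<le> j \<and> j \<le> l1) \<or> (i = 2 \<and> 1 \<le> j \<and> j \<le> l2)}"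

definition pexps :: "nat \<Rightarrow> nat \<Rightarrow> pexp set" where
  "pexps l1 l2 = {\<alpha>. \<forall>q. q \<notin> pidx l1 l2 \<longrightarrow> \<alpha> q = 0}"

text \<open>total degree of a p-monomial (= its I-adic order)\<close>
definition pdeg :: "nat \<Rightarrow> nat \<Rightarrow> pexp \<Rightarrow> nat" where
  "pdeg l1 l2 \<alpha> = (\<Sum>q\<in>pidx l1 l2. \<alpha> q)"

definition pvar :: "nat \<times> nat \<Rightarrow> pexp" where
  "pvar q = (\<lambda>q'. if q' = q then 1 else 0)"

definition is_elem :: "nat \<Rightarrow> nat \<Rightarrow> 'k::zero ser \<Rightarrow> bool" where
  "is_elem l1 l2 g \<longleftrightarrow>
     (\<forall>\<alpha> m. \<alpha> \<notin> pexps l1 l2 \<longrightarrow> g \<alpha> m = 0) \<and> (\<forall>\<alpha>. finite {m. g \<alpha> m \<noteq> 0})"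

definition ser_one :: "'k::{zero,one} ser" where
  "ser_one \<alpha> m = (if \<alpha> = (\<lambda>_. 0) \<and> m = (0, 0) then 1 else 0)"

definition ser_sub :: "'k::ab_group_add ser \<Rightarrow> 'k ser \<Rightarrow> 'k ser" where
  "ser_sub g h \<alpha> m = g \<alpha> m - h \<alpha> m"

definition vsub :: "int \<times> int \<Rightarrow> int \<times> int \<Rightarrow> int \<times> int" where
  "vsub m m' = (fst m - fst m', snd m - snd m')"

definition pairing :: "int \<times> int \<Rightarrow> int \<times> int \<Rightarrow> int" where
  "pairing n m = fst n * fst m + snd n * snd m"

text \<open>product in R^ (all sums are finite for elements of R^)\<close>
definition ser_mult :: "'k::comm_ring_1 ser \<Rightarrow> 'k ser \<Rightarrow> 'k ser" where
  "ser_mult g h \<alpha> m =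
     (\<Sum>\<beta>\<in>{\<beta>. \<forall>q. \<beta> q \<le> \<alpha> q}. \<Sum>m'\<in>{m'. g \<beta> m' \<noteq> 0}.
        g \<beta> m' * h (\<lambda>q. \<alpha> q - \<beta> q) (vsub m m'))"

definition ser_pow :: "'k::comm_ring_1 ser \<Rightarrow> nat \<Rightarrow> 'k ser" where
  "ser_pow g j = (ser_mult g ^^ j) ser_one"

text \<open>inverse of an element g with g = 1 mod I: sum of the geometric series
  (1 - g)^j, truncated where it is I-adically zero\<close>
definition ser_inv :: "nat \<Rightarrow> nat \<Rightarrow> 'k::comm_ring_1 ser \<Rightarrow> 'k ser" where
  "ser_inv l1 l2 g \<alpha> m = (\<Sum>j\<le>pdeg l1 l2 \<alpha>. ser_pow (ser_sub ser_one g) j \<alpha> m)"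

definition ser_zpow :: "nat \<Rightarrow> nat \<Rightarrow> 'k::comm_ring_1 ser \<Rightarrow> int \<Rightarrow> 'k ser" where
  "ser_zpow l1 l2 g z = (if 0 \<le> z then ser_pow g (nat z) else ser_pow (ser_inv l1 l2 g) (nat (- z)))"

definition cong_modI :: "nat \<Rightarrow> nat \<Rightarrow> nat \<Rightarrow> 'k ser \<Rightarrow> 'k ser \<Rightarrow> bool" where
  "cong_modI l1 l2 N g h \<longleftrightarrow> (\<forall>\<alpha> m. pdeg l1 l2 \<alpha> < N \<longrightarrow> g \<alpha> m = h \<alpha> m)"

text \<open>Wall-crossing automorphism of R^ for a wall with function f, where n is the
  normal vector with <n,v> < 0 for the velocity v of the crossing path:
  x^m |-> x^m f^<n,m> (p's fixed), extended I-adically continuously.\<close>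
definition wall_cross :: "nat \<Rightarrow> nat \<Rightarrow> 'k::comm_ring_1 ser \<Rightarrow> int \<times> int \<Rightarrow> 'k ser \<Rightarrow> 'k ser" where
  "wall_cross l1 l2 f n g \<alpha> m =
     (\<Sum>\<beta>\<in>{\<beta>. \<forall>q. \<beta> q \<le> \<alpha> q}. \<Sum>m'\<in>{m'. g \<beta> m' \<noteq> 0}.
        g \<beta> m' * ser_zpow l1 l2 f (pairing n m') (\<lambda>q. \<alpha> q - \<beta> q) (vsub m m'))"

text \<open>P_1 = 1 + sum_{j=1}^{l1} p_(1,j) x^j and P_2 = 1 + sum_{j=1}^{l2} p_(2,j) y^j\<close>
definition P1 :: "nat \<Rightarrow> 'k::{zero,one} ser" where
  "P1 l1 \<alpha> m = (if \<alpha> = (\<lambda>_. 0) \<and> m = (0, 0) then 1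
     else if (\<exists>j. 1 \<le> j \<and> j \<le> l1 \<and> \<alpha> = pvar (1, j) \<and> m = (int j, 0)) then 1 else 0)"

definition P2 :: "nat \<Rightarrow> 'k::{zero,one} ser" where
  "P2 l2 \<alpha> m = (if \<alpha> = (\<lambda>_. 0) \<and> m = (0, 0) then 1
     else if (\<exists>j. 1 \<le> j \<and> j \<le> l2 \<and> \<alpha> = pvar (2, j) \<and> m = (0, int j)) then 1 else 0)"

text \<open>ray directions: coprime (a,b) with a,b > 0; the ray is R_{<=0}(a,b)\<close>
definition raydirs :: "(int \<times> int) set" where
  "raydirs = {(a, b). 0 < a \<and> 0 < b \<and> coprime a b}"

text \<open>f is an admissible wall function for primitive direction m0:
  f = 1 + sum_{j>=1} c_j x^{j m0} with c_j in the ideal generated by the p's\<close>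
definition is_wall_fun :: "nat \<Rightarrow> nat \<Rightarrow> int \<times> int \<Rightarrow> 'k::{zero,one} ser \<Rightarrow> bool" where
  "is_wall_fun l1 l2 m0 f \<longleftrightarrow> is_elem l1 l2 f \<and>
     (\<forall>\<alpha>. f \<alpha> (0, 0) = (if \<alpha> = (\<lambda>_. 0) then 1 else 0)) \<and>
     (\<forall>\<alpha> m. f \<alpha> m \<noteq> 0 \<longrightarrow> (\<exists>j::nat. m = (int j * fst m0, int j * snd m0))) \<and>
     (\<forall>j::nat. 1 \<le> j \<longrightarrow> f (\<lambda>_. 0) (int j * fst m0, int j * snd m0) = 0)"

definition nontriv_rays :: "nat \<Rightarrow> nat \<Rightarrow> nat \<Rightarrow> (int \<times> int \<Rightarrow> 'k::{zero,one} ser) \<Rightarrow> (int \<times> int) set" where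
  "nontriv_rays l1 l2 N f = {v \<in> raydirs. \<not> cong_modI l1 l2 N (f v) ser_one}"

text \<open>The wall-crossing automorphisms met by a small counterclockwise loop around the
  origin, starting in the open fourth quadrant (which contains no walls), in the
  order they are crossed: positive x-axis, positive y-axis, negative x-axis, the
  rays R_{<=0}(a,b) by increasing slope b/a, negative y-axis.  Only the rays with
  function nontrivial modulo I^N are listed (the others act trivially modulo I^N).
  The normal n is the primitive one with <n, velocity> < 0.\<close>
definition loop_ops :: "nat \<Rightarrow> nat \<Rightarrow> nat \<Rightarrow> (int \<times> int \<Rightarrow> 'k::comm_ring_1 ser) \<Rightarrow> ('k ser \<Rightarrow> 'k ser) list" where
  "loop_ops l1 l2 N f =
     [wall_cross l1 l2 (P1 l1) (0, -1), wall_cross l1 l2 (P2 l2) (1, 0),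
      wall_cross l1 l2 (P1 l1) (0, 1)]
     @ map (\<lambda>v. wall_cross l1 l2 (f v) (- snd v, fst v))
         (SOME xs. distinct xs \<and> set xs = nontriv_rays l1 l2 N f \<and>
            sorted_wrt (\<lambda>v w. real_of_int (snd v) / real_of_int (fst v)
                               < real_of_int (snd w) / real_of_int (fst w)) xs)
     @ [wall_cross l1 l2 (P2 l2) (-1, 0)]"

text \<open>path-ordered product theta_r o ... o theta_1 (theta_1 crossed first)\<close>
definition path_ordered :: "('a \<Rightarrow> 'a) list \<Rightarrow> 'a \<Rightarrow> 'a" where
  "path_ordered ts = fold (\<lambda>t acc. t \<circ> acc) ts id"

text \<open>f describes Scat(P1,P2): the diagram with lines (R e1, P1), (R e2, P2) and rays
  (R_{<=0}(a,b), f (a,b)) for coprime (a,b) in Z_{>0}^2 (trivial function allowed,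
  meaning no ray) is a scattering diagram (finitely many walls nontrivial modulo
  each I^N) and is consistent.\<close>
definition is_scat :: "nat \<Rightarrow> nat \<Rightarrow> (int \<times> int \<Rightarrow> 'k::comm_ring_1 ser) \<Rightarrow> bool" where
  "is_scat l1 l2 f \<longleftrightarrow>
     (\<forall>v\<in>raydirs. is_wall_fun l1 l2 v (f v)) \<and>
     (\<forall>N. finite (nontriv_rays l1 l2 N f)) \<and>
     (\<forall>N g. is_elem l1 l2 g \<longrightarrow> cong_modI l1 l2 N (path_ordered (loop_ops l1 l2 N f) g) g)"

datatype wall = XAxis | YAxis | Ray "int \<times> int"

definition walls :: "wall set" where
  "walls = {XAxis, YAxis} \<union> Ray ` raydirs"

definition wall_set :: "wall \<Rightarrow> (real \<times> real) set" where
  "wall_set w = (case w of XAxis \<Rightarrow> {P. snd P = 0} | YAxis \<Rightarrow> {P. fst P = 0}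
     | Ray v \<Rightarrow> {(- t * real_of_int (fst v), - t * real_of_int (snd v)) | t. 0 \<le> t})"

definition wall_dir :: "wall \<Rightarrow> int \<times> int" where
  "wall_dir w = (case w of XAxis \<Rightarrow> (1, 0) | YAxis \<Rightarrow> (0, 1) | Ray v \<Rightarrow> v)"

definition wall_fun :: "nat \<Rightarrow> nat \<Rightarrow> (int \<times> int \<Rightarrow> 'k::{zero,one} ser) \<Rightarrow> wall \<Rightarrow> 'k ser" where
  "wall_fun l1 l2 f w = (case w of XAxis \<Rightarrow> P1 l1 | YAxis \<Rightarrow> P2 l2 | Ray v \<Rightarrow> f v)"

definition wall_normal :: "wall \<Rightarrow> int \<times> int" where
  "wall_normal w = (- snd (wall_dir w), fst (wall_dir w))"

definition bad_points :: "(real \<times> real) set" where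
  "bad_points = {(0, 0)} \<union>
     {P. \<exists>w1\<in>walls. \<exists>w2\<in>walls. w1 \<noteq> w2 \<and> P \<in> wall_set w1 \<and> P \<in> wall_set w2}"

definition rvec :: "int \<times> int \<Rightarrow> real \<times> real" where
  "rvec m = (real_of_int (fst m), real_of_int (snd m))"

text \<open>multiplication in k[[p]] (coefficients of monomials x^m in R^)\<close>
definition ps_mult :: "(pexp \<Rightarrow> 'k::comm_ring_1) \<Rightarrow> (pexp \<Rightarrow> 'k) \<Rightarrow> pexp \<Rightarrow> 'k" where
  "ps_mult c d \<alpha> = (\<Sum>\<beta>\<in>{\<beta>. \<forall>q. \<beta> q \<le> \<alpha> q}. c \<beta> * d (\<lambda>q. \<alpha> q - \<beta> q))"

definition ps_one :: "pexp \<Rightarrow> 'k::{zero,one}" where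
  "ps_one \<alpha> = (if \<alpha> = (\<lambda>_. 0) then 1 else 0)"

text \<open>A broken line: beta :: real => R^2 (only its values on (-oo,0] matter),
  number of breakpoints l, breakpoints tau 1 < ... < tau l < 0, exponents ms 0..ms l,
  coefficients cs 0..cs l in k[[p]]; the monomial on the i-th piece is
  (cs i) x^(ms i).  On the i-th piece (tau i <= t <= tau (i+1), with tau 0 = -oo
  and tau (l+1) = 0) beta is affine with velocity -ms i.\<close>
definition broken_line ::
  "nat \<Rightarrow> nat \<Rightarrow> (int \<times> int \<Rightarrow> 'k::comm_ring_1 ser) \<Rightarrow> (real \<Rightarrow> real \<times> real) \<Rightarrow> nat \<Rightarrow>
   (nat \<Rightarrow> real) \<Rightarrow> (nat \<Rightarrow> int \<times> int) \<Rightarrow> (nat \<Rightarrow> pexp \<Rightarrow> 'k) \<Rightarrow> bool" where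
  "broken_line l1 l2 f \<beta> l \<tau> ms cs \<longleftrightarrow>
     (\<forall>i. 1 \<le> i \<and> i < l \<longrightarrow> \<tau> i < \<tau> (Suc i)) \<and> (1 \<le> l \<longrightarrow> \<tau> l < 0) \<and>
     cs 0 = ps_one \<and>
     (\<forall>t\<le>0. \<beta> t \<notin> bad_points) \<and>
     (\<forall>i\<le>l. \<forall>t s. t \<le> (if i = l then 0 else \<tau> (Suc i)) \<and> s \<le> (if i = l then 0 else \<tau> (Suc i))
         \<and> (i = 0 \<or> (\<tau> i \<le> t \<and> \<tau> i \<le> s))
         \<longrightarrow> \<beta> t - \<beta> s = (s - t) *\<^sub>R rvec (ms i)) \<and>
     (\<forall>i. 1 \<le> i \<and> i \<le> l \<longrightarrow>
        (\<exists>w\<in>walls. \<beta> (\<tau> i) \<in> wall_set w \<and>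
           (\<forall>w'\<in>walls. \<beta> (\<tau> i) \<in> wall_set w' \<longrightarrow> w' = w) \<and>
           pairing (wall_normal w) (ms (i - 1)) \<noteq> 0 \<and>
           cs i = ps_mult (cs (i - 1))
                   (\<lambda>\<alpha>. ser_pow (wall_fun l1 l2 f w) (nat \<bar>pairing (wall_normal w) (ms (i - 1))\<bar>)
                          \<alpha> (vsub (ms i) (ms (i - 1)))) \<and>
           cs i \<noteq> (\<lambda>_. 0) \<and>
           \<not> (cs i = cs (i - 1) \<and> ms i = ms (i - 1))))"

definition one_bending ::
  "nat \<Rightarrow> nat \<Rightarrow> (int \<times> int \<Rightarrow> 'k::comm_ring_1 ser) \<Rightarrow> nat \<Rightarrow> nat \<Rightarrow> nat \<Rightarrow> nat \<Rightarrow> nat \<Rightarrow> bool" where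
  "one_bending l1 l2 f d1 d2 a b k \<longleftrightarrow>
     (\<forall>\<beta> l \<tau> ms cs. broken_line l1 l2 f \<beta> l \<tau> ms cs \<and>
        ms 0 = (- int d1, - int d2) \<and>
        ms l = (int k * int a - int d1, int k * int b - int d2) \<and>
        (\<forall>i. 1 \<le> i \<and> i \<le> l \<longrightarrow>
           \<not> ((snd (\<beta> (\<tau> i)) = 0 \<and> fst (\<beta> (\<tau> i)) > 0) \<or> (fst (\<beta> (\<tau> i)) = 0 \<and> snd (\<beta> (\<tau> i)) > 0)))
        \<longrightarrow> l = 1)"

end

theory Submission
  imports Defs
begin

(* A bend happens on a wall, off the positive axes, hence at a point -s d with s > 0, where the
   wall direction d lies in the closed first quadrant; since the wall function is a series in
   x^d, the exponent grows there by a positive multiple of d. Along a straight piece with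
   velocity -m the quantity det(beta, m) is constant, and a bend does not change it either,
   because the exponent changes parallel to the bending point. Conservation of this angular
   momentum forces the wall directions d_1, d_2, ... to rotate strictly monotonically, with the
   orientation of det(d_1, m_0). Summing the steps, the total change k (a, b) lies on the same
   side of m_0 = -(d1, d2) as d_1 and, if there are at least two bends, strictly beyond d_1 and
   componentwise above it. So the slope of d_1 = (p, q) lies strictly between a/b and d1/d2 with
   q <= k b (or symmetrically p <= k a), which the bounds on d1/d2 exclude: p/q and a/b differ
   by at least 1/(q b) >= 1/(k b^2). *)

definition ray_multiples :: "int \<times> int \<Rightarrow> (int \<times> int) set" where
  "ray_multiples d = range (\<lambda>j::nat. (int j * fst d, int j * snd d))"

lemma zero_in_ray_multiples: "(0, 0) \<in> ray_multiples d"
  unfolding ray_multiples_def by (auto intro: range_eqI[of _ _ 0])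

lemma ray_multiples_add:
  assumes "u \<in> ray_multiples d" "v \<in> ray_multiples d"
  shows "u + v \<in> ray_multiples d"
proof -
  obtain i j :: nat where "u = (int i * fst d, int i * snd d)" "v = (int j * fst d, int j * snd d)"
    using assms unfolding ray_multiples_def by blast
  then have "u + v = (int (i + j) * fst d, int (i + j) * snd d)"
    by (simp add: algebra_simps)
  then show ?thesis unfolding ray_multiples_def by blast
qed

lemma ray_multiples_pointed:
  assumes "d \<noteq> (0, 0)" "u \<in> ray_multiples d" "- u \<in> ray_multiples d"
  shows "u = (0, 0)"
proof -
  obtain i j :: nat where "u = (int i * fst d, int i * snd d)" "- u = (int j * fst d, int j * snd d)"
    using assms(2,3) unfolding ray_multiples_def by blast
  then have "(int i + int j) * fst d = 0" "(int i + int j) * snd d = 0"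
    by (auto simp: algebra_simps)
  with assms(1) have "i = 0" by (cases d) auto
  with \<open>u = _\<close> show ?thesis by simp
qed

lemma vsub_eq_diff: "vsub m m' = m - m'"
  by (simp add: vsub_def prod_eq_iff)

lemma vsub_zero_left: "vsub (0, 0) m = - m"
  by (simp add: vsub_def prod_eq_iff)

lemma ser_mult_support:
  fixes g h :: "'k::comm_ring_1 ser"
  assumes "\<And>\<beta> m. g \<beta> m \<noteq> 0 \<Longrightarrow> m \<in> C" "\<And>\<beta> m. h \<beta> m \<noteq> 0 \<Longrightarrow> m \<in> C"
    and "\<And>u v. u \<in> C \<Longrightarrow> v \<in> C \<Longrightarrow> u + v \<in> C"
    and "ser_mult g h \<alpha> m \<noteq> 0"
  shows "m \<in> C"
proof -
  obtain \<beta> where "(\<Sum>m'\<in>{m'. g \<beta> m' \<noteq> 0}. g \<beta> m' * h (\<lambda>q. \<alpha> q - \<beta> q) (m - m')) \<noteq> 0"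
    using assms(4) unfolding ser_mult_def vsub_eq_diff by (rule sum.not_neutral_contains_not_neutral)
  then obtain m' where "g \<beta> m' * h (\<lambda>q. \<alpha> q - \<beta> q) (m - m') \<noteq> 0"
    by (rule sum.not_neutral_contains_not_neutral)
  then have "g \<beta> m' \<noteq> 0" "h (\<lambda>q. \<alpha> q - \<beta> q) (m - m') \<noteq> 0"
    by auto
  then have "m' + (m - m') \<in> C"
    using assms(1,2) by (intro assms(3))
  then show ?thesis by simp
qed

lemma ser_mult_finite_support:
  fixes g h :: "'k::comm_ring_1 ser"
  assumes "\<And>\<beta>. finite {m. g \<beta> m \<noteq> 0}" "\<And>\<beta>. finite {m. h \<beta> m \<noteq> 0}"
  shows "finite {m. ser_mult g h \<alpha> m \<noteq> 0}"
proof (cases "finite {\<beta>::pexp. \<forall>q. \<beta> q \<le> \<alpha> q}")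
  case False
  then show ?thesis by (simp add: ser_mult_def)
next
  case True
  define B where "B = {\<beta>::pexp. \<forall>q. \<beta> q \<le> \<alpha> q}"
  define S where "S = (\<Union>\<beta>\<in>B. {m. g \<beta> m \<noteq> 0} \<times> {m. h (\<lambda>q. \<alpha> q - \<beta> q) m \<noteq> 0})"
  have "finite B" using True by (simp add: B_def)
  then have "finite S" using assms by (simp add: S_def)
  moreover have "{m. ser_mult g h \<alpha> m \<noteq> 0} \<subseteq> (\<lambda>(u, v). u + v) ` S"
  proof
    fix m assume "m \<in> {m. ser_mult g h \<alpha> m \<noteq> 0}"
    then have "(\<Sum>\<beta>\<in>B. \<Sum>m'\<in>{m'. g \<beta> m' \<noteq> 0}. g \<beta> m' * h (\<lambda>q. \<alpha> q - \<beta> q) (m - m')) \<noteq> 0"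
      by (simp add: ser_mult_def vsub_eq_diff B_def)
    then obtain \<beta> where "\<beta> \<in> B"
      and sum_nonzero: "(\<Sum>m'\<in>{m'. g \<beta> m' \<noteq> 0}. g \<beta> m' * h (\<lambda>q. \<alpha> q - \<beta> q) (m - m')) \<noteq> 0"
      by (rule sum.not_neutral_contains_not_neutral)
    from sum_nonzero obtain m' where "g \<beta> m' * h (\<lambda>q. \<alpha> q - \<beta> q) (m - m') \<noteq> 0"
      by (rule sum.not_neutral_contains_not_neutral)
    then have "g \<beta> m' \<noteq> 0" "h (\<lambda>q. \<alpha> q - \<beta> q) (m - m') \<noteq> 0"
      by auto
    with \<open>\<beta> \<in> B\<close> have "(m', m - m') \<in> S"
      by (auto simp: S_def)
    then show "m \<in> (\<lambda>(u, v). u + v) ` S"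
      by (rule rev_image_eqI) simp
  qed
  ultimately show ?thesis
    by (metis finite_imageI finite_subset)
qed

lemma ser_mult_at_zero:
  fixes g h :: "'k::comm_ring_1 ser"
  assumes "\<And>\<beta>. finite {m. g \<beta> m \<noteq> 0}"
    and "\<And>\<beta> m. g \<beta> m \<noteq> 0 \<Longrightarrow> m \<in> C" "\<And>\<beta> m. h \<beta> m \<noteq> 0 \<Longrightarrow> m \<in> C"
    and "\<And>u. u \<in> C \<Longrightarrow> - u \<in> C \<Longrightarrow> u = (0, 0)"
  shows "ser_mult g h \<alpha> (0, 0) = ps_mult (\<lambda>\<beta>. g \<beta> (0, 0)) (\<lambda>\<beta>. h \<beta> (0, 0)) \<alpha>"
  unfolding ser_mult_def ps_mult_def
proof (rule sum.cong[OF refl])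
  fix \<beta>
  have "g \<beta> m' * h (\<lambda>q. \<alpha> q - \<beta> q) (vsub (0, 0) m') = 0" if "m' \<noteq> (0, 0)" for m'
  proof (rule ccontr)
    assume "g \<beta> m' * h (\<lambda>q. \<alpha> q - \<beta> q) (vsub (0, 0) m') \<noteq> 0"
    then have "g \<beta> m' \<noteq> 0" "h (\<lambda>q. \<alpha> q - \<beta> q) (- m') \<noteq> 0"
      by (auto simp: vsub_zero_left)
    then have "m' \<in> C" "- m' \<in> C"
      using assms(2,3) by blast+
    with assms(4) that show False by blast
  qed
  then have "(\<Sum>m'\<in>{m'. g \<beta> m' \<noteq> 0}. g \<beta> m' * h (\<lambda>q. \<alpha> q - \<beta> q) (vsub (0, 0) m'))
      = (\<Sum>m'\<in>{m'. g \<beta> m' \<noteq> 0}. if m' = (0, 0) then g \<beta> (0, 0) * h (\<lambda>q. \<alpha> q - \<beta> q) (0, 0) else 0)"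
    by (intro sum.cong) (auto simp: vsub_def)
  also have "\<dots> = g \<beta> (0, 0) * h (\<lambda>q. \<alpha> q - \<beta> q) (0, 0)"
    using assms(1) by (simp add: sum.delta)
  finally show "(\<Sum>m'\<in>{m'. g \<beta> m' \<noteq> 0}. g \<beta> m' * h (\<lambda>q. \<alpha> q - \<beta> q) (vsub (0, 0) m'))
      = g \<beta> (0, 0) * h (\<lambda>q. \<alpha> q - \<beta> q) (0, 0)" .
qed

lemma ps_one_infinite:
  assumes "\<not> finite {\<beta>::pexp. \<forall>q. \<beta> q \<le> \<alpha> q}"
  shows "ps_one \<alpha> = 0"
proof -
  have "{\<beta>::pexp. \<forall>q. \<beta> q \<le> 0} = {\<lambda>_. 0}"
    by (auto simp: fun_eq_iff)
  with assms have "\<alpha> \<noteq> (\<lambda>_. 0)" by auto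
  then show ?thesis by (simp add: ps_one_def)
qed

lemma ps_mult_infinite: "\<not> finite {\<beta>::pexp. \<forall>q. \<beta> q \<le> \<alpha> q} \<Longrightarrow> ps_mult c d \<alpha> = 0"
  by (simp add: ps_mult_def)

lemma ps_mult_one_left:
  fixes c :: "pexp \<Rightarrow> 'k::comm_ring_1"
  assumes "finite {\<beta>::pexp. \<forall>q. \<beta> q \<le> \<alpha> q}"
  shows "ps_mult ps_one c \<alpha> = c \<alpha>"
proof -
  have "ps_mult ps_one c \<alpha> = (\<Sum>\<beta>\<in>{\<beta>. \<forall>q. \<beta> q \<le> \<alpha> q}. if \<beta> = (\<lambda>_. 0) then c \<alpha> else 0)"
    unfolding ps_mult_def by (rule sum.cong) (auto simp: ps_one_def)
  then show ?thesis using assms by (simp add: sum.delta)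
qed

lemma ps_mult_one_right:
  fixes c :: "pexp \<Rightarrow> 'k::comm_ring_1"
  assumes "finite {\<beta>::pexp. \<forall>q. \<beta> q \<le> \<alpha> q}"
  shows "ps_mult c ps_one \<alpha> = c \<alpha>"
proof -
  have "(\<lambda>q. \<alpha> q - \<beta> q) = (\<lambda>_. 0) \<longleftrightarrow> \<beta> = \<alpha>" if "\<forall>q. \<beta> q \<le> \<alpha> q" for \<beta>
    using that by (auto simp: fun_eq_iff intro: antisym)
  then have "ps_mult c ps_one \<alpha> = (\<Sum>\<beta>\<in>{\<beta>. \<forall>q. \<beta> q \<le> \<alpha> q}. if \<beta> = \<alpha> then c \<alpha> else 0)"
    unfolding ps_mult_def by (intro sum.cong) (auto simp: ps_one_def)
  then show ?thesis using assms by (simp add: sum.delta')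
qed

lemma ps_mult_one_one: "ps_mult ps_one ps_one \<alpha> = (ps_one \<alpha> :: 'k::comm_ring_1)"
  by (cases "finite {\<beta>::pexp. \<forall>q. \<beta> q \<le> \<alpha> q}")
    (simp_all add: ps_mult_one_left ps_mult_infinite ps_one_infinite)

definition ray_series :: "'k::{zero,one} ser \<Rightarrow> int \<times> int \<Rightarrow> bool" where
  "ray_series F d \<longleftrightarrow> (\<forall>\<alpha>. finite {m. F \<alpha> m \<noteq> 0}) \<and>
     (\<forall>\<alpha> m. F \<alpha> m \<noteq> 0 \<longrightarrow> m \<in> ray_multiples d) \<and> (\<forall>\<alpha>. F \<alpha> (0, 0) = ps_one \<alpha>)"

lemma ray_series_ser_one: "ray_series ser_one d"
proof -
  have "{m. ser_one \<alpha> m \<noteq> 0} \<subseteq> {(0, 0)}" for \<alpha>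
    by (auto simp: ser_one_def split: if_splits)
  then show ?thesis
    unfolding ray_series_def
    by (auto simp: ser_one_def ps_one_def zero_in_ray_multiples intro: finite_subset)
qed

lemma ray_series_ser_mult:
  fixes F G :: "'k::comm_ring_1 ser"
  assumes d: "d \<noteq> (0, 0)" and F: "ray_series F d" and G: "ray_series G d"
  shows "ray_series (ser_mult F G) d"
proof -
  have fin: "\<And>\<alpha>. finite {m. F \<alpha> m \<noteq> 0}" "\<And>\<alpha>. finite {m. G \<alpha> m \<noteq> 0}"
    and supp: "\<And>\<alpha> m. F \<alpha> m \<noteq> 0 \<Longrightarrow> m \<in> ray_multiples d" "\<And>\<alpha> m. G \<alpha> m \<noteq> 0 \<Longrightarrow> m \<in> ray_multiples d"
    and const: "\<And>\<alpha>. F \<alpha> (0, 0) = ps_one \<alpha>" "\<And>\<alpha>. G \<alpha> (0, 0) = ps_one \<alpha>"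
    using F G unfolding ray_series_def by blast+
  have "ser_mult F G \<alpha> (0, 0) = ps_mult (\<lambda>\<beta>. F \<beta> (0, 0)) (\<lambda>\<beta>. G \<beta> (0, 0)) \<alpha>" for \<alpha>
    using fin(1) supp ray_multiples_pointed[OF d] by (rule ser_mult_at_zero)
  then have "ser_mult F G \<alpha> (0, 0) = ps_one \<alpha>" for \<alpha>
    by (simp add: const ps_mult_one_one)
  moreover have "finite {m. ser_mult F G \<alpha> m \<noteq> 0}" for \<alpha>
    using fin by (rule ser_mult_finite_support)
  moreover have "m \<in> ray_multiples d" if "ser_mult F G \<alpha> m \<noteq> 0" for \<alpha> m
    using supp ray_multiples_add that by (rule ser_mult_support)
  ultimately show ?thesis unfolding ray_series_def by blast
qed

lemma ray_series_ser_pow: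
  fixes F :: "'k::comm_ring_1 ser"
  assumes "d \<noteq> (0, 0)" "ray_series F d"
  shows "ray_series (ser_pow F n) d"
  by (induction n) (simp_all add: ser_pow_def ray_series_ser_one ray_series_ser_mult assms)

(* Coefficient functions only matter at exponents alpha with finitely many beta <= alpha; at
   the other ones ps_mult is 0, the junk value of an infinite sum, and so must be c. *)
lemma bend_exponent_step:
  fixes F :: "'k::comm_ring_1 ser" and c c' :: "pexp \<Rightarrow> 'k"
  assumes d: "d \<noteq> (0, 0)" and F: "ray_series F d"
    and c': "c' = ps_mult c (\<lambda>\<alpha>. ser_pow F n \<alpha> (vsub m' m))"
    and nonzero: "c' \<noteq> (\<lambda>_. 0)" and changed: "\<not> (c' = c \<and> m' = m)"
    and coeff_infinite: "\<And>\<alpha>. \<not> finite {\<beta>::pexp. \<forall>q. \<beta> q \<le> \<alpha> q} \<Longrightarrow> c \<alpha> = 0"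
  obtains j :: nat where "1 \<le> j" "m' = m + (int j * fst d, int j * snd d)"
proof -
  have pow: "ray_series (ser_pow F n) d"
    using d F by (rule ray_series_ser_pow)
  obtain \<alpha> where "c' \<alpha> \<noteq> 0" using nonzero by auto
  then obtain \<beta> where "ser_pow F n \<beta> (vsub m' m) \<noteq> 0"
    unfolding c' ps_mult_def by (metis (no_types, lifting) mult_zero_right sum.neutral)
  then have "vsub m' m \<in> ray_multiples d"
    using pow unfolding ray_series_def by blast
  then obtain j :: nat where "m' - m = (int j * fst d, int j * snd d)"
    unfolding ray_multiples_def vsub_eq_diff by blast
  then have j: "m' = m + (int j * fst d, int j * snd d)"
    by (simp add: diff_eq_eq add.commute)
  have "j \<noteq> 0"
  proof
    assume "j = 0"
    then have "m' = m" using j by (simp add: zero_prod_def)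
    have "c' \<alpha> = c \<alpha>" for \<alpha>
    proof (cases "finite {\<beta>::pexp. \<forall>q. \<beta> q \<le> \<alpha> q}")
      case True
      have "(\<lambda>\<alpha>. ser_pow F n \<alpha> (vsub m' m)) = ps_one"
        using pow \<open>m' = m\<close> by (auto simp: ray_series_def vsub_def)
      then show ?thesis
        using True by (simp add: c' ps_mult_one_right)
    next
      case False
      then show ?thesis by (simp add: c' ps_mult_infinite coeff_infinite)
    qed
    with changed \<open>m' = m\<close> show False by auto
  qed
  with j show ?thesis by (intro that[of j]) auto
qed

lemma ray_series_P1: "ray_series (P1 l1) (1, 0)"
proof -
  have "{m. P1 l1 \<alpha> m \<noteq> 0} \<subseteq> insert (0, 0) ((\<lambda>j. (int j, 0)) ` {1..l1})" for \<alpha>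
    by (auto simp: P1_def split: if_splits)
  then have "finite {m. P1 l1 \<alpha> m \<noteq> 0}" for \<alpha>
    by (rule finite_subset) simp
  moreover have "m \<in> ray_multiples (1, 0)" if "P1 l1 \<alpha> m \<noteq> 0" for \<alpha> m
    using that zero_in_ray_multiples by (auto simp: P1_def ray_multiples_def split: if_splits)
  moreover have "P1 l1 \<alpha> (0, 0) = ps_one \<alpha>" for \<alpha>
    by (simp add: P1_def ps_one_def)
  ultimately show ?thesis
    unfolding ray_series_def by blast
qed

lemma ray_series_P2: "ray_series (P2 l2) (0, 1)"
proof -
  have "{m. P2 l2 \<alpha> m \<noteq> 0} \<subseteq> insert (0, 0) ((\<lambda>j. (0, int j)) ` {1..l2})" for \<alpha>
    by (auto simp: P2_def split: if_splits)
  then have "finite {m. P2 l2 \<alpha> m \<noteq> 0}" for \<alpha>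
    by (rule finite_subset) simp
  moreover have "m \<in> ray_multiples (0, 1)" if "P2 l2 \<alpha> m \<noteq> 0" for \<alpha> m
    using that zero_in_ray_multiples by (auto simp: P2_def ray_multiples_def split: if_splits)
  moreover have "P2 l2 \<alpha> (0, 0) = ps_one \<alpha>" for \<alpha>
    by (simp add: P2_def ps_one_def)
  ultimately show ?thesis
    unfolding ray_series_def by blast
qed

lemma ray_series_wall_fun:
  assumes "is_scat l1 l2 f" "w \<in> walls"
  shows "ray_series (wall_fun l1 l2 f w) (wall_dir w)"
proof -
  consider "w = XAxis" | "w = YAxis" | v where "w = Ray v" "v \<in> raydirs"
    using assms(2) unfolding walls_def by auto
  then show ?thesis
  proof cases
    case (3 v)
    then have "is_wall_fun l1 l2 v (f v)"
      using assms(1) unfolding is_scat_def by blast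
    then have "ray_series (f v) v"
      unfolding ray_series_def is_wall_fun_def is_elem_def ray_multiples_def ps_one_def
      by (auto simp: image_iff)
    with 3 show ?thesis
      by (simp add: wall_fun_def wall_dir_def)
  qed (simp_all add: ray_series_P1 ray_series_P2 wall_fun_def wall_dir_def)
qed

definition first_quadrant :: "(int \<times> int) set" where
  "first_quadrant = {u. 0 \<le> fst u \<and> 0 \<le> snd u}"

lemma wall_dir_first_quadrant: "w \<in> walls \<Longrightarrow> wall_dir w \<in> first_quadrant - {(0, 0)}"
  by (auto simp: walls_def raydirs_def wall_dir_def first_quadrant_def)

definition det2 :: "'a::comm_ring \<times> 'a \<Rightarrow> 'a \<times> 'a \<Rightarrow> 'a" where
  "det2 u w = fst u * snd w - snd u * fst w"

lemma det2_rvec [simp]: "det2 (rvec u) (rvec w) = real_of_int (det2 u w)"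
  by (simp add: det2_def rvec_def)

lemma det2_scaleR_left [simp]: "det2 (x *\<^sub>R u) w = x * det2 u (w :: real \<times> real)"
  by (simp add: det2_def algebra_simps)

lemma det2_scaleR_right [simp]: "det2 u (x *\<^sub>R w) = x * det2 u (w :: real \<times> real)"
  by (simp add: det2_def algebra_simps)

lemma det2_uminus_left [simp]: "det2 (- u) w = - det2 u w"
  by (simp add: det2_def)

lemma det2_uminus_right [simp]: "det2 u (- w) = - det2 u w"
  by (simp add: det2_def)

lemma det2_add_right: "det2 u (v + w) = det2 u v + det2 u w"
  by (simp add: det2_def algebra_simps)

lemma det2_add_left: "det2 (u + v) w = det2 u w + det2 v w"
  by (simp add: det2_def algebra_simps)

lemma det2_diff_right: "det2 u (v - w) = det2 u v - det2 u w"
  by (simp add: det2_def algebra_simps)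

lemma det2_self [simp]: "det2 u u = 0"
  by (simp add: det2_def algebra_simps)

lemma det2_swap: "det2 w u = - det2 u w"
  by (simp add: det2_def algebra_simps)

lemma det2_multiple_right [simp]: "det2 u (n * fst w, n * snd w) = n * det2 u w"
  by (simp add: det2_def algebra_simps)

lemma pairing_wall_normal: "pairing (wall_normal w) m = det2 (wall_dir w) m"
  by (simp add: pairing_def wall_normal_def det2_def)

lemma wall_point_off_positive_axes:
  assumes "w \<in> walls" "Q \<in> wall_set w" "Q \<noteq> (0, 0)"
    and "\<not> ((snd Q = 0 \<and> fst Q > 0) \<or> (fst Q = 0 \<and> snd Q > 0))"
  obtains s where "0 < s" "Q = - s *\<^sub>R rvec (wall_dir w)"
proof -
  consider "w = XAxis" | "w = YAxis" | v where "w = Ray v" "v \<in> raydirs"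
    using assms(1) unfolding walls_def by auto
  then show ?thesis
  proof cases
    case 1
    with assms(2-4) have "fst Q < 0" "snd Q = 0"
      by (cases Q; auto simp: wall_set_def)+
    then show ?thesis
      using 1 by (intro that[of "- fst Q"]) (auto simp: wall_dir_def rvec_def prod_eq_iff)
  next
    case 2
    with assms(2-4) have "snd Q < 0" "fst Q = 0"
      by (cases Q; auto simp: wall_set_def)+
    then show ?thesis
      using 2 by (intro that[of "- snd Q"]) (auto simp: wall_dir_def rvec_def prod_eq_iff)
  next
    case (3 v)
    then obtain t where t: "Q = (- t * real_of_int (fst v), - t * real_of_int (snd v))" "0 \<le> t"
      using assms(2) by (auto simp: wall_set_def)
    with assms(3) have "t \<noteq> 0" by auto
    with t 3 show ?thesis
      by (intro that[of t]) (auto simp: wall_dir_def rvec_def)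
  qed
qed

lemma broken_line_coeff_infinite:
  assumes "broken_line l1 l2 f \<beta> l \<tau> ms cs" "i \<le> l"
    and "\<not> finite {\<beta>::pexp. \<forall>q. \<beta> q \<le> \<alpha> q}"
  shows "cs i \<alpha> = 0"
proof (cases "i = 0")
  case True
  with assms show ?thesis
    by (simp add: broken_line_def ps_one_infinite)
next
  case False
  with assms(1,2) obtain c' where "cs i = ps_mult (cs (i - 1)) c'"
    unfolding broken_line_def by (meson less_one not_le)
  with assms(3) show ?thesis
    by (simp add: ps_mult_infinite)
qed

lemma broken_line_breakpoint_neg:
  assumes "broken_line l1 l2 f \<beta> l \<tau> ms cs" "1 \<le> i" "i \<le> l"
  shows "\<tau> i < 0"
proof -
  have "\<tau> i \<le> \<tau> l"
    using assms(3)
  proof (induction rule: inc_induct)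
    case (step n)
    with assms(1,2) have "\<tau> n < \<tau> (Suc n)"
      unfolding broken_line_def by auto
    with step.IH show ?case by simp
  qed simp
  moreover have "\<tau> l < 0"
    using assms unfolding broken_line_def by simp
  ultimately show ?thesis by simp
qed

lemma broken_line_segment:
  assumes "broken_line l1 l2 f \<beta> l \<tau> ms cs" "1 \<le> i" "i < l"
  shows "\<tau> i < \<tau> (Suc i)" "\<beta> (\<tau> (Suc i)) - \<beta> (\<tau> i) = (\<tau> i - \<tau> (Suc i)) *\<^sub>R rvec (ms i)"
proof -
  show "\<tau> i < \<tau> (Suc i)"
    using assms unfolding broken_line_def by simp
  moreover have "\<forall>i\<le>l. \<forall>t s. t \<le> (if i = l then 0 else \<tau> (Suc i)) \<and> s \<le> (if i = l then 0 else \<tau> (Suc i))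
      \<and> (i = 0 \<or> (\<tau> i \<le> t \<and> \<tau> i \<le> s)) \<longrightarrow> \<beta> t - \<beta> s = (s - t) *\<^sub>R rvec (ms i)"
    using assms(1) unfolding broken_line_def by blast
  ultimately show "\<beta> (\<tau> (Suc i)) - \<beta> (\<tau> i) = (\<tau> i - \<tau> (Suc i)) *\<^sub>R rvec (ms i)"
    using assms(3) by (auto dest!: spec[of _ i])
qed

lemma broken_line_bend:
  fixes f :: "int \<times> int \<Rightarrow> 'k::comm_ring_1 ser"
  assumes scat: "is_scat l1 l2 f" and bl: "broken_line l1 l2 f \<beta> l \<tau> ms cs"
    and i: "1 \<le> i" "i \<le> l"
    and off_axes: "\<not> ((snd (\<beta> (\<tau> i)) = 0 \<and> fst (\<beta> (\<tau> i)) > 0) \<or> (fst (\<beta> (\<tau> i)) = 0 \<and> snd (\<beta> (\<tau> i)) > 0))"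
  obtains d s j where "d \<in> first_quadrant" "0 < s" "\<beta> (\<tau> i) = - s *\<^sub>R rvec d" "1 \<le> j"
    "ms i = ms (i - 1) + (int j * fst d, int j * snd d)" "det2 d (ms (i - 1)) \<noteq> 0"
proof -
  have "\<exists>w\<in>walls. \<beta> (\<tau> i) \<in> wall_set w \<and> pairing (wall_normal w) (ms (i - 1)) \<noteq> 0 \<and>
      cs i = ps_mult (cs (i - 1)) (\<lambda>\<alpha>. ser_pow (wall_fun l1 l2 f w)
        (nat \<bar>pairing (wall_normal w) (ms (i - 1))\<bar>) \<alpha> (vsub (ms i) (ms (i - 1)))) \<and>
      cs i \<noteq> (\<lambda>_. 0) \<and> \<not> (cs i = cs (i - 1) \<and> ms i = ms (i - 1))"
    using bl i unfolding broken_line_def by blast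
  then obtain w where w: "w \<in> walls" "\<beta> (\<tau> i) \<in> wall_set w"
    and crossing: "pairing (wall_normal w) (ms (i - 1)) \<noteq> 0"
    and coeff: "cs i = ps_mult (cs (i - 1)) (\<lambda>\<alpha>. ser_pow (wall_fun l1 l2 f w)
        (nat \<bar>pairing (wall_normal w) (ms (i - 1))\<bar>) \<alpha> (vsub (ms i) (ms (i - 1))))"
    and bent: "cs i \<noteq> (\<lambda>_. 0)" "\<not> (cs i = cs (i - 1) \<and> ms i = ms (i - 1))"
    by blast
  have dir: "wall_dir w \<in> first_quadrant" "wall_dir w \<noteq> (0, 0)"
    using wall_dir_first_quadrant[OF w(1)] by auto
  have "\<beta> (\<tau> i) \<notin> bad_points"
    using bl broken_line_breakpoint_neg[OF bl i] unfolding broken_line_def by simp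
  then have "\<beta> (\<tau> i) \<noteq> (0, 0)"
    by (auto simp: bad_points_def)
  then obtain s where s: "0 < s" "\<beta> (\<tau> i) = - s *\<^sub>R rvec (wall_dir w)"
    using wall_point_off_positive_axes[OF w _ off_axes] by blast
  have coeff_infinite: "cs (i - 1) \<alpha> = 0" if "\<not> finite {\<beta>::pexp. \<forall>q. \<beta> q \<le> \<alpha> q}" for \<alpha>
    using broken_line_coeff_infinite[OF bl _ that] i by simp
  obtain j where j: "1 \<le> j" "ms i = ms (i - 1) + (int j * fst (wall_dir w), int j * snd (wall_dir w))"
    using bend_exponent_step[OF dir(2) ray_series_wall_fun[OF scat w(1)] coeff bent coeff_infinite] by blast
  show thesis
    using that[OF dir(1) s j] crossing by (simp add: pairing_wall_normal)
qed

lemma broken_line_bends: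
  fixes f :: "int \<times> int \<Rightarrow> 'k::comm_ring_1 ser"
  assumes scat: "is_scat l1 l2 f" and bl: "broken_line l1 l2 f \<beta> l \<tau> ms cs"
    and off_axes: "\<forall>i. 1 \<le> i \<and> i \<le> l \<longrightarrow>
      \<not> ((snd (\<beta> (\<tau> i)) = 0 \<and> fst (\<beta> (\<tau> i)) > 0) \<or> (fst (\<beta> (\<tau> i)) = 0 \<and> snd (\<beta> (\<tau> i)) > 0))"
  obtains dir s j where "\<And>i. 1 \<le> i \<Longrightarrow> i \<le> l \<Longrightarrow> dir i \<in> first_quadrant \<and> 0 < s i \<and>
      \<beta> (\<tau> i) = - s i *\<^sub>R rvec (dir i) \<and> 1 \<le> j i \<and>
      ms i = ms (i - 1) + (int (j i) * fst (dir i), int (j i) * snd (dir i)) \<and>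
      det2 (dir i) (ms (i - 1)) \<noteq> 0"
proof -
  define bend where "bend i d s j \<longleftrightarrow> d \<in> first_quadrant \<and> 0 < s \<and>
      \<beta> (\<tau> i) = - s *\<^sub>R rvec d \<and> 1 \<le> j \<and>
      ms i = ms (i - 1) + (int j * fst d, int j * snd d) \<and> det2 d (ms (i - 1)) \<noteq> 0"
    for i d s and j :: nat
  have "\<exists>d s j. 1 \<le> i \<and> i \<le> l \<longrightarrow> bend i d s j" for i
  proof (cases "1 \<le> i \<and> i \<le> l")
    case True
    then have i: "1 \<le> i" "i \<le> l" by auto
    with off_axes have "\<not> ((snd (\<beta> (\<tau> i)) = 0 \<and> fst (\<beta> (\<tau> i)) > 0) \<or> (fst (\<beta> (\<tau> i)) = 0 \<and> snd (\<beta> (\<tau> i)) > 0))"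
      by blast
    then obtain d s j where "d \<in> first_quadrant" "0 < s" "\<beta> (\<tau> i) = - s *\<^sub>R rvec d" "1 \<le> j"
      "ms i = ms (i - 1) + (int j * fst d, int j * snd d)" "det2 d (ms (i - 1)) \<noteq> 0"
      by (rule broken_line_bend[OF scat bl i])
    then show ?thesis unfolding bend_def by blast
  qed blast
  then obtain dir where "\<exists>s j. 1 \<le> i \<and> i \<le> l \<longrightarrow> bend i (dir i) s j" for i
    by (metis choice)
  then obtain s where "\<exists>j. 1 \<le> i \<and> i \<le> l \<longrightarrow> bend i (dir i) (s i) j" for i
    by (metis choice)
  then obtain j where "1 \<le> i \<and> i \<le> l \<longrightarrow> bend i (dir i) (s i) (j i)" for i
    by (metis choice)
  then show thesis
    using that[of dir s j] unfolding bend_def by blast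
qed

lemma angular_momentum_conserved:
  fixes P m :: "nat \<Rightarrow> real \<times> real" and t :: "nat \<Rightarrow> real"
  assumes segment: "\<And>i. 1 \<le> i \<Longrightarrow> i < l \<Longrightarrow> P (Suc i) - P i = t i *\<^sub>R m i"
    and bend: "\<And>i. 1 \<le> i \<Longrightarrow> i \<le> l \<Longrightarrow> det2 (P i) (m i) = det2 (P i) (m (i - 1))"
    and i: "1 \<le> i" "i \<le> l"
  shows "det2 (P i) (m (i - 1)) = det2 (P 1) (m 0)"
  using i
proof (induction i rule: dec_induct)
  case (step n)
  have "P (Suc n) = P n + t n *\<^sub>R m n"
    using segment[of n] step by (simp add: algebra_simps)
  then have "det2 (P (Suc n)) (m n) = det2 (P n) (m n)"
    by (simp add: det2_add_left)
  with bend[of n] step show ?case by simp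
qed simp

lemma bend_vertex_momentum:
  fixes P :: "nat \<Rightarrow> real \<times> real" and dir m :: "nat \<Rightarrow> int \<times> int" and s \<tau> :: "nat \<Rightarrow> real"
    and j :: "nat \<Rightarrow> nat"
  assumes vertex: "\<And>i. 1 \<le> i \<Longrightarrow> i \<le> l \<Longrightarrow> P i = - s i *\<^sub>R rvec (dir i)"
    and step: "\<And>i. 1 \<le> i \<Longrightarrow> i \<le> l \<Longrightarrow>
      m i = m (i - 1) + (int (j i) * fst (dir i), int (j i) * snd (dir i))"
    and segment: "\<And>i. 1 \<le> i \<Longrightarrow> i < l \<Longrightarrow> P (Suc i) - P i = (\<tau> i - \<tau> (Suc i)) *\<^sub>R rvec (m i)"
    and i: "1 \<le> i" "i \<le> l"
  shows "s i * real_of_int (det2 (dir i) (m (i - 1))) = s 1 * real_of_int (det2 (dir 1) (m 0))"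
proof -
  have "det2 (P i) (rvec (m i)) = det2 (P i) (rvec (m (i - 1)))" if "1 \<le> i" "i \<le> l" for i
    using vertex[OF that] step[OF that] by (simp add: det2_add_right)
  then have "det2 (P i) (rvec (m (i - 1))) = det2 (P 1) (rvec (m 0))"
    using segment i by (intro angular_momentum_conserved[where t = "\<lambda>i. \<tau> i - \<tau> (Suc i)"]) auto
  then show ?thesis
    using vertex[of i] vertex[of 1] i by simp
qed

lemma bend_directions_leave:
  fixes P :: "nat \<Rightarrow> real \<times> real" and dir m :: "nat \<Rightarrow> int \<times> int" and s \<tau> :: "nat \<Rightarrow> real"
    and j :: "nat \<Rightarrow> nat" and c :: int
  assumes vertex: "\<And>i. 1 \<le> i \<Longrightarrow> i \<le> l \<Longrightarrow> 0 < s i \<and> P i = - s i *\<^sub>R rvec (dir i)"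
    and step: "\<And>i. 1 \<le> i \<Longrightarrow> i \<le> l \<Longrightarrow>
      m i = m (i - 1) + (int (j i) * fst (dir i), int (j i) * snd (dir i))"
    and segment: "\<And>i. 1 \<le> i \<Longrightarrow> i < l \<Longrightarrow> P (Suc i) - P i = (\<tau> i - \<tau> (Suc i)) *\<^sub>R rvec (m i)"
    and first: "0 < c * det2 (dir 1) (m 0)"
    and i: "1 \<le> i" "i \<le> l"
  shows "0 < c * det2 (dir i) (m (i - 1))"
proof -
  have "s i * real_of_int (det2 (dir i) (m (i - 1))) = s 1 * real_of_int (det2 (dir 1) (m 0))"
    using vertex step segment i by (intro bend_vertex_momentum[where P = P and \<tau> = \<tau>]) auto
  then have "s i * real_of_int (c * det2 (dir i) (m (i - 1))) = s 1 * real_of_int (c * det2 (dir 1) (m 0))"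
    using arg_cong[of _ _ "\<lambda>x. real_of_int c * x"] by (simp add: algebra_simps)
  also have "\<dots> > 0"
    using vertex[of 1] i first by (intro mult_pos_pos) (simp_all del: of_int_mult)
  finally have "0 < real_of_int (c * det2 (dir i) (m (i - 1)))"
    by (rule zero_less_mult_pos) (use vertex[OF i] in simp)
  then show ?thesis by (simp only: of_int_0_less_iff)
qed

lemma bend_directions_rotate:
  fixes P :: "nat \<Rightarrow> real \<times> real" and dir m :: "nat \<Rightarrow> int \<times> int" and s \<tau> :: "nat \<Rightarrow> real"
    and j :: "nat \<Rightarrow> nat" and c :: int
  assumes vertex: "\<And>i. 1 \<le> i \<Longrightarrow> i \<le> l \<Longrightarrow> 0 < s i \<and> P i = - s i *\<^sub>R rvec (dir i)"
    and step: "\<And>i. 1 \<le> i \<Longrightarrow> i \<le> l \<Longrightarrow>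
      m i = m (i - 1) + (int (j i) * fst (dir i), int (j i) * snd (dir i))"
    and segment: "\<And>i. 1 \<le> i \<Longrightarrow> i < l \<Longrightarrow>
      \<tau> i < \<tau> (Suc i) \<and> P (Suc i) - P i = (\<tau> i - \<tau> (Suc i)) *\<^sub>R rvec (m i)"
    and leaving: "\<And>i. 1 \<le> i \<Longrightarrow> i \<le> l \<Longrightarrow> 0 < c * det2 (dir i) (m (i - 1))"
    and i: "1 \<le> i" "i < l"
  shows "0 < c * det2 (dir i) (dir (Suc i))"
proof -
  have "P (Suc i) = P i + (\<tau> i - \<tau> (Suc i)) *\<^sub>R rvec (m i)"
    using segment[OF i] by (simp add: algebra_simps)
  then have "det2 (P i) (P (Suc i)) = (\<tau> i - \<tau> (Suc i)) * det2 (P i) (rvec (m i))"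
    by (simp add: det2_add_right)
  moreover have "det2 (P i) (rvec (m i)) = - s i * real_of_int (det2 (dir i) (m (i - 1)))"
    using vertex[of i] step[of i] i by (simp add: det2_add_right)
  moreover have "det2 (P i) (P (Suc i)) = s i * s (Suc i) * real_of_int (det2 (dir i) (dir (Suc i)))"
    using vertex[of i] vertex[of "Suc i"] i by simp
  ultimately have rotation: "s i * s (Suc i) * real_of_int (det2 (dir i) (dir (Suc i)))
      = (\<tau> (Suc i) - \<tau> i) * (s i * real_of_int (det2 (dir i) (m (i - 1))))"
    by (simp add: algebra_simps)
  have "s i * s (Suc i) * real_of_int (c * det2 (dir i) (dir (Suc i)))
      = real_of_int c * (s i * s (Suc i) * real_of_int (det2 (dir i) (dir (Suc i))))"
    by simp
  also have "\<dots> = (\<tau> (Suc i) - \<tau> i) * (s i * real_of_int (c * det2 (dir i) (m (i - 1))))"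
    unfolding rotation by simp
  also have "\<dots> > 0"
    using segment[OF i] vertex[of i] leaving[of i] i
    by (intro mult_pos_pos) (simp_all del: of_int_mult)
  finally have "0 < real_of_int (c * det2 (dir i) (dir (Suc i)))"
    by (rule zero_less_mult_pos) (use vertex[of i] vertex[of "Suc i"] i in simp)
  then show ?thesis by (simp only: of_int_0_less_iff)
qed

lemma det2_pos_trans:
  fixes a b w :: "int \<times> int"
  assumes "a \<in> first_quadrant" "b \<in> first_quadrant" "w \<in> first_quadrant"
    and ab: "0 < det2 a b" and bw: "0 < det2 b w"
  shows "0 < det2 a w"
proof -
  have "0 \<le> snd a * fst b"
    using assms(1,2) by (simp add: first_quadrant_def)
  then have "0 < fst a * snd b"
    using ab by (simp add: det2_def)
  then have "0 < fst a"
    using assms(2) by (simp add: first_quadrant_def zero_less_mult_iff)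
  have "fst b * det2 a w = fst a * det2 b w + fst w * det2 a b"
    by (simp add: det2_def algebra_simps)
  also have "\<dots> > 0"
  proof -
    have "0 < fst a * det2 b w"
      using \<open>0 < fst a\<close> bw by (rule mult_pos_pos)
    moreover have "0 \<le> fst w * det2 a b"
      using assms(3) ab by (simp add: first_quadrant_def)
    ultimately show ?thesis by linarith
  qed
  finally show ?thesis
    using assms(2) by (simp add: first_quadrant_def zero_less_mult_iff)
qed

lemma det2_signed_trans:
  fixes a b w :: "int \<times> int"
  assumes "c = 1 \<or> c = -1" "a \<in> first_quadrant" "b \<in> first_quadrant" "w \<in> first_quadrant"
    and "0 < c * det2 a b" "0 < c * det2 b w"
  shows "0 < c * det2 a w"
  using assms(1)
proof
  assume "c = 1"
  with assms show ?thesis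
    using det2_pos_trans[of a b w] by simp
next
  assume "c = -1"
  then have "0 < det2 w b" "0 < det2 b a"
    using assms(5,6) det2_swap[of a b] det2_swap[of b w] by simp_all
  then have "0 < det2 w a"
    using assms(2-4) by (intro det2_pos_trans[of w b a])
  with \<open>c = -1\<close> show ?thesis
    using det2_swap[of a w] by simp
qed


(* a/b < p/q < m/n <= (k a b + 1)/(k b^2) is impossible for q <= k b, as p/q - a/b >= 1/(q b). *)
lemma no_lattice_slope_between:
  fixes p q a b k m n :: int
  assumes "0 \<le> p" "0 \<le> q" "0 < b" "0 < n" "q \<le> k * b"
    and upper: "k * b\<^sup>2 * m \<le> (k * a * b + 1) * n"
    and above: "q * a < p * b"
    and below: "p * n < q * m"
  shows False
proof -
  have "0 \<le> p * n"
    using assms(1,4) by simp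
  with below assms(2) have "0 < q"
    by (cases "q = 0") auto
  with assms(5) have "0 < k * b"
    by linarith
  with assms(3) have "0 < k"
    by (simp add: zero_less_mult_iff)
  have "k * b * 1 \<le> k * b * (p * b - q * a)"
    using above \<open>0 < k\<close> assms(3) by (intro mult_left_mono) auto
  then have gap: "q * (k * a * b + 1) \<le> p * (k * b\<^sup>2)"
    using assms(5) by (simp add: algebra_simps power2_eq_square)
  have "0 < k * b\<^sup>2"
    using \<open>0 < k\<close> assms(3) by simp
  have "q * (k * b\<^sup>2 * m) \<le> q * ((k * a * b + 1) * n)"
    using upper \<open>0 < q\<close> by (intro mult_left_mono) auto
  also have "\<dots> = q * (k * a * b + 1) * n"
    by (simp add: mult.assoc)
  also have "\<dots> \<le> p * (k * b\<^sup>2) * n"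
    using gap assms(4) by (intro mult_right_mono) auto
  also have "\<dots> = p * n * (k * b\<^sup>2)"
    by (simp add: ac_simps)
  also have "\<dots> < q * m * (k * b\<^sup>2)"
    using below \<open>0 < k * b\<^sup>2\<close> by (rule mult_strict_right_mono)
  also have "\<dots> = q * (k * b\<^sup>2 * m)"
    by (simp add: ac_simps)
  finally show False by simp
qed

lemma signed_no_lattice_slope_between:
  fixes p q a b k m n c :: int
  assumes "0 \<le> p" "0 \<le> q" "0 \<le> a" "0 \<le> b" "0 \<le> m" "0 \<le> n" "0 < k" "c = 1 \<or> c = -1"
    and upper: "k * b\<^sup>2 * m \<le> (k * a * b + 1) * n"
    and lower: "a * n < m * b"
    and side: "0 \<le> c * det2 (k * a, k * b) (- m, - n)"
    and beyond: "0 < c * det2 (p, q) (k * a, k * b)"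
    and "q \<le> k * b"
    and first: "0 < c * det2 (p, q) (- m, - n)"
  shows False
proof -
  have "0 \<le> a * n"
    using assms(3,6) by simp
  with lower have "0 < m * b" by linarith
  with assms(4,5) have "0 < m" "0 < b"
    by (auto simp: zero_less_mult_iff)
  with assms(7) have "0 < k * b\<^sup>2 * m"
    by simp
  with upper have "0 < (k * a * b + 1) * n"
    by linarith
  moreover have "0 < k * a * b + 1"
    using assms(3,7) \<open>0 < b\<close> by simp
  ultimately have "0 < n"
    by (simp add: zero_less_mult_iff)
  have "det2 (k * a, k * b) (- m, - n) = k * (m * b - a * n)"
    by (simp add: det2_def algebra_simps)
  with lower assms(7) have "0 < det2 (k * a, k * b) (- m, - n)"
    by simp
  with side assms(8) have "c = 1"
    by auto
  show False
  proof (rule no_lattice_slope_between[OF assms(1,2) \<open>0 < b\<close> \<open>0 < n\<close> \<open>q \<le> k * b\<close> upper])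
    have "det2 (p, q) (k * a, k * b) = k * (p * b - q * a)"
      by (simp add: det2_def algebra_simps)
    with beyond \<open>c = 1\<close> assms(7) show "q * a < p * b"
      by (simp add: zero_less_mult_iff)
    show "p * n < q * m"
      using first \<open>c = 1\<close> by (simp add: det2_def)
  qed
qed

lemma real_frac_le_iff:
  fixes x y z w :: nat
  assumes "0 < y" "0 < w"
  shows "real x / real y \<le> real z / real w \<longleftrightarrow> int x * int w \<le> int z * int y"
proof -
  have "real x / real y \<le> real z / real w \<longleftrightarrow> real x * real w \<le> real z * real y"
    using assms by (simp add: divide_simps)
  also have "\<dots> \<longleftrightarrow> x * w \<le> z * y"
    by (simp flip: of_nat_mult)
  also have "\<dots> \<longleftrightarrow> int x * int w \<le> int z * int y"
    by (simp flip: of_nat_mult)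
  finally show ?thesis .
qed

lemma real_frac_less_iff:
  fixes x y z w :: nat
  assumes "0 < y" "0 < w"
  shows "real x / real y < real z / real w \<longleftrightarrow> int x * int w < int z * int y"
proof -
  have "real x / real y < real z / real w \<longleftrightarrow> real x * real w < real z * real y"
    using assms by (simp add: divide_simps)
  also have "\<dots> \<longleftrightarrow> x * w < z * y"
    by (simp flip: of_nat_mult)
  also have "\<dots> \<longleftrightarrow> int x * int w < int z * int y"
    by (simp flip: of_nat_mult)
  finally show ?thesis .
qed

lemma slope_bounds_int:
  fixes d1 d2 a b k :: nat
  assumes "1 \<le> k" "0 < b" "0 < d2"
    and "(real d1 / real d2 \<le> real (k * a * b + 1) / real (k * b ^ 2)
            \<and> real a / real b < real d1 / real d2)
         \<or> (real (k * a ^ 2) / real (k * a * b + 1) \<le> real d1 / real d2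
            \<and> real d1 / real d2 < real a / real b)"
  shows "(int k * (int b)\<^sup>2 * int d1 \<le> (int k * int a * int b + 1) * int d2 \<and> int a * int d2 < int d1 * int b)
    \<or> (int k * (int a)\<^sup>2 * int d2 \<le> (int k * int b * int a + 1) * int d1 \<and> int b * int d1 < int d2 * int a)"
proof -
  have "0 < k * b\<^sup>2" "0 < k * a * b + 1"
    using assms(1,2) by simp_all
  with assms(2-4) have "(int d1 * int (k * b\<^sup>2) \<le> int (k * a * b + 1) * int d2 \<and> int a * int d2 < int d1 * int b)
    \<or> (int (k * a\<^sup>2) * int d2 \<le> int d1 * int (k * a * b + 1) \<and> int d1 * int b < int a * int d2)"
    by (simp only: real_frac_le_iff real_frac_less_iff)
  then show ?thesis
    by (simp add: algebra_simps)
qed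

lemma first_bend_direction_impossible:
  fixes u :: "int \<times> int" and c :: int and d1 d2 a b k :: nat
  assumes "1 \<le> k" "0 < b" "0 < d2" "u \<in> first_quadrant" "c = 1 \<or> c = -1"
    and slope: "(real d1 / real d2 \<le> real (k * a * b + 1) / real (k * b ^ 2)
            \<and> real a / real b < real d1 / real d2)
         \<or> (real (k * a ^ 2) / real (k * a * b + 1) \<le> real d1 / real d2
            \<and> real d1 / real d2 < real a / real b)"
    and side: "0 \<le> c * det2 (int k * int a, int k * int b) (- int d1, - int d2)"
    and beyond: "0 < c * det2 u (int k * int a, int k * int b)"
    and dominated: "fst u \<le> int k * int a" "snd u \<le> int k * int b"
    and first: "0 < c * det2 u (- int d1, - int d2)"
  shows False
proof -
  obtain p q where u: "u = (p, q)" by fastforce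
  have pq: "0 \<le> p" "0 \<le> q"
    using assms(4) by (auto simp: u first_quadrant_def)
  have k: "0 < int k" using assms(1) by simp
  from slope_bounds_int[OF assms(1-3) slope] show False
  proof (elim disjE conjE)
    assume "int k * (int b)\<^sup>2 * int d1 \<le> (int k * int a * int b + 1) * int d2" "int a * int d2 < int d1 * int b"
    then show False
      by (rule signed_no_lattice_slope_between[OF pq of_nat_0_le_iff of_nat_0_le_iff of_nat_0_le_iff
            of_nat_0_le_iff k assms(5) _ _ side])
        (use beyond dominated first in \<open>simp_all add: u\<close>)
  next
    \<comment> \<open>the first alternative with the coordinates swapped\<close>
    assume upper: "int k * (int a)\<^sup>2 * int d2 \<le> (int k * int b * int a + 1) * int d1"
      and lower: "int b * int d1 < int d2 * int a"
    have "- c = 1 \<or> - c = -1"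
      using assms(5) by auto
    moreover have "0 \<le> - c * det2 (int k * int b, int k * int a) (- int d2, - int d1)"
      using side by (simp add: det2_def algebra_simps)
    moreover have "0 < - c * det2 (q, p) (int k * int b, int k * int a)"
      using beyond by (simp add: u det2_def algebra_simps)
    moreover have "p \<le> int k * int a"
      using dominated by (simp add: u)
    moreover have "0 < - c * det2 (q, p) (- int d2, - int d1)"
      using first by (simp add: u det2_def algebra_simps)
    ultimately show False
      using signed_no_lattice_slope_between[OF pq(2,1) of_nat_0_le_iff of_nat_0_le_iff of_nat_0_le_iff
          of_nat_0_le_iff k _ upper lower] by blast
  qed
qed

locale rotating_steps =
  fixes l :: nat and dir m :: "nat \<Rightarrow> int \<times> int" and j :: "nat \<Rightarrow> nat" and c :: int
  assumes sign: "c = 1 \<or> c = -1"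
    and quadrant: "\<And>i. 1 \<le> i \<Longrightarrow> i \<le> l \<Longrightarrow> dir i \<in> first_quadrant"
    and exponent_step: "\<And>i. 1 \<le> i \<Longrightarrow> i \<le> l \<Longrightarrow>
      1 \<le> j i \<and> m i = m (i - 1) + (int (j i) * fst (dir i), int (j i) * snd (dir i))"
    and leaving: "\<And>i. 1 \<le> i \<Longrightarrow> i \<le> l \<Longrightarrow> 0 < c * det2 (dir i) (m (i - 1))"
    and rotating: "\<And>i. 1 \<le> i \<Longrightarrow> i < l \<Longrightarrow> 0 < c * det2 (dir i) (dir (Suc i))"
begin

lemma step_det2_right:
  "1 \<le> i \<Longrightarrow> i \<le> l \<Longrightarrow> det2 u (m i - m 0) = det2 u (m (i - 1) - m 0) + int (j i) * det2 u (dir i)"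
  using exponent_step[of i] by (simp add: det2_def algebra_simps)

lemma step_det2_left:
  "1 \<le> i \<Longrightarrow> i \<le> l \<Longrightarrow> det2 (m i - m 0) u = det2 (m (i - 1) - m 0) u + int (j i) * det2 (dir i) u"
  using exponent_step[of i] by (simp add: det2_def algebra_simps)

lemma rotating_trans:
  assumes "1 \<le> r" "r < i" "i \<le> l"
  shows "0 < c * det2 (dir r) (dir i)"
proof -
  have "Suc r \<le> i" using assms(2) by simp
  then show ?thesis
    using assms(3)
  proof (induction i rule: dec_induct)
    case base
    with assms(1) show ?case by (intro rotating) auto
  next
    case (step n)
    have "0 < c * det2 (dir n) (dir (Suc n))"
      using step assms(1) by (intro rotating) auto
    moreover have "0 < c * det2 (dir r) (dir n)"
      using step by simp
    ultimately show ?case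
      using det2_signed_trans[OF sign quadrant[of r] quadrant[of n] quadrant[of "Suc n"]] step assms(1)
      by simp
  qed
qed

lemma partial_change_behind:
  assumes "n < i" "i \<le> l"
  shows "c * det2 (dir i) (m n - m 0) \<le> 0"
  using assms(1)
proof (induction n)
  case 0
  then show ?case by (simp add: det2_def)
next
  case (Suc n)
  have "0 < c * det2 (dir (Suc n)) (dir i)"
    using Suc.prems assms(2) by (intro rotating_trans) auto
  then have "int (j (Suc n)) * (c * det2 (dir i) (dir (Suc n))) \<le> 0"
    by (simp add: det2_swap[of "dir i"] mult_nonneg_nonpos)
  with Suc show ?case
    using step_det2_right[of "Suc n" "dir i"] assms(2) by (simp add: algebra_simps)
qed

lemma dir_initial_side: "1 \<le> i \<Longrightarrow> i \<le> l \<Longrightarrow> 0 < c * det2 (dir i) (m 0)"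
  using leaving[of i] partial_change_behind[of "i - 1" i]
  by (simp add: det2_diff_right algebra_simps)

lemma total_change_side: "0 \<le> c * det2 (m l - m 0) (m 0)"
proof -
  have "0 \<le> c * det2 (m n - m 0) (m 0)" if "n \<le> l" for n
    using that
  proof (induction n)
    case (Suc n)
    have "c * det2 (m (Suc n) - m 0) (m 0) = c * det2 (m n - m 0) (m 0) + int (j (Suc n)) * (c * det2 (dir (Suc n)) (m 0))"
      using step_det2_left[of "Suc n" "m 0"] Suc.prems by (simp add: algebra_simps)
    moreover have "0 < c * det2 (dir (Suc n)) (m 0)"
      using Suc.prems by (intro dir_initial_side) auto
    ultimately show ?case
      using Suc by simp
  qed (simp add: det2_def)
  then show ?thesis by simp
qed

lemma total_change_beyond_first:
  assumes "2 \<le> l"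
  shows "0 < c * det2 (dir 1) (m l - m 0)"
proof -
  have nonneg: "0 \<le> c * det2 (dir 1) (m n - m 0)" if "n \<le> l" for n
    using that
  proof (induction n)
    case (Suc n)
    have "0 \<le> c * det2 (dir 1) (dir (Suc n))"
      using rotating_trans[of 1 "Suc n"] Suc.prems by (cases n) auto
    moreover have "c * det2 (dir 1) (m (Suc n) - m 0)
        = c * det2 (dir 1) (m n - m 0) + int (j (Suc n)) * (c * det2 (dir 1) (dir (Suc n)))"
      using step_det2_right[of "Suc n" "dir 1"] Suc.prems by (simp add: algebra_simps)
    ultimately show ?case
      using Suc by simp
  qed (simp add: det2_def)
  have "0 < c * det2 (dir 1) (dir l)"
    using assms by (intro rotating_trans) auto
  moreover have "1 \<le> j l"
    using exponent_step[of l] assms by auto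
  ultimately have "0 < int (j l) * (c * det2 (dir 1) (dir l))"
    by simp
  moreover have "c * det2 (dir 1) (m l - m 0)
      = c * det2 (dir 1) (m (l - 1) - m 0) + int (j l) * (c * det2 (dir 1) (dir l))"
    using step_det2_right[of l "dir 1"] assms by (simp add: algebra_simps)
  ultimately show ?thesis
    using nonneg[of "l - 1"] by simp
qed

lemma total_change_dominates_first:
  assumes "1 \<le> l"
  shows "fst (dir 1) \<le> fst (m l - m 0) \<and> snd (dir 1) \<le> snd (m l - m 0)"
proof -
  have "fst (dir 1) \<le> fst (m n - m 0) \<and> snd (dir 1) \<le> snd (m n - m 0)" if "1 \<le> n" "n \<le> l" for n
    using that
  proof (induction n rule: dec_induct)
    case base
    have "1 \<le> j 1" "m 1 - m 0 = (int (j 1) * fst (dir 1), int (j 1) * snd (dir 1))"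
      using exponent_step[of 1] assms by auto
    moreover have "0 \<le> fst (dir 1)" "0 \<le> snd (dir 1)"
      using quadrant[of 1] assms by (auto simp: first_quadrant_def)
    ultimately show ?case
      using mult_right_mono[of 1 "int (j 1)" "fst (dir 1)"] mult_right_mono[of 1 "int (j 1)" "snd (dir 1)"]
      by simp
  next
    case (step n)
    then have "0 \<le> int (j (Suc n)) * fst (dir (Suc n))" "0 \<le> int (j (Suc n)) * snd (dir (Suc n))"
      using quadrant[of "Suc n"] by (auto simp: first_quadrant_def)
    with step exponent_step[of "Suc n"] show ?case
      by simp
  qed
  with assms show ?thesis by simp
qed

end

lemma (in rotating_steps) single_step:
  fixes d1 d2 a b k :: nat
  assumes "1 \<le> k" "0 < b" "0 < d2"
    and slope: "(real d1 / real d2 \<le> real (k * a * b + 1) / real (k * b ^ 2)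
            \<and> real a / real b < real d1 / real d2)
         \<or> (real (k * a ^ 2) / real (k * a * b + 1) \<le> real d1 / real d2
            \<and> real d1 / real d2 < real a / real b)"
    and initial: "m 0 = (- int d1, - int d2)"
    and total: "m l - m 0 = (int k * int a, int k * int b)"
  shows "l = 1"
proof (rule ccontr)
  have "1 \<le> l"
    using total assms(1,2) by (cases l) (auto simp: zero_prod_def)
  moreover assume "l \<noteq> 1"
  ultimately have "2 \<le> l" by simp
  show False
  proof (rule first_bend_direction_impossible[OF assms(1-3) _ sign slope])
    show "dir 1 \<in> first_quadrant"
      using quadrant \<open>1 \<le> l\<close> by blast
    show "0 \<le> c * det2 (int k * int a, int k * int b) (- int d1, - int d2)"
      unfolding total[symmetric] initial[symmetric] by (rule total_change_side)
    show "0 < c * det2 (dir 1) (int k * int a, int k * int b)"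
      unfolding total[symmetric] by (rule total_change_beyond_first[OF \<open>2 \<le> l\<close>])
    show "fst (dir 1) \<le> int k * int a" "snd (dir 1) \<le> int k * int b"
      using total_change_dominates_first[OF \<open>1 \<le> l\<close>] unfolding total by auto
    show "0 < c * det2 (dir 1) (- int d1, - int d2)"
      using leaving[of 1] \<open>1 \<le> l\<close> by (simp add: initial)
  qed
qed

lemma broken_line_rotating_steps:
  fixes f :: "int \<times> int \<Rightarrow> 'k::comm_ring_1 ser"
  assumes scat: "is_scat l1 l2 f" and bl: "broken_line l1 l2 f \<beta> l \<tau> ms cs"
    and off_axes: "\<forall>i. 1 \<le> i \<and> i \<le> l \<longrightarrow>
      \<not> ((snd (\<beta> (\<tau> i)) = 0 \<and> fst (\<beta> (\<tau> i)) > 0) \<or> (fst (\<beta> (\<tau> i)) = 0 \<and> snd (\<beta> (\<tau> i)) > 0))"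
  obtains dir j c where "rotating_steps l dir ms j c"
proof -
  obtain dir s j where bends: "\<And>i. 1 \<le> i \<Longrightarrow> i \<le> l \<Longrightarrow> dir i \<in> first_quadrant \<and> 0 < s i \<and>
      \<beta> (\<tau> i) = - s i *\<^sub>R rvec (dir i) \<and> 1 \<le> j i \<and>
      ms i = ms (i - 1) + (int (j i) * fst (dir i), int (j i) * snd (dir i)) \<and>
      det2 (dir i) (ms (i - 1)) \<noteq> 0"
    using broken_line_bends[OF scat bl off_axes] by blast
  define c :: int where "c = (if 0 < det2 (dir 1) (ms 0) then 1 else -1)"
  have first: "0 < c * det2 (dir 1) (ms 0)" if "1 \<le> l"
    using bends[of 1] that by (auto simp: c_def)
  have leaving: "0 < c * det2 (dir i) (ms (i - 1))" if "1 \<le> i" "i \<le> l" for i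
    by (rule bend_directions_leave[where P = "\<lambda>i. \<beta> (\<tau> i)" and \<tau> = \<tau> and s = s and j = j])
      (use bends broken_line_segment[OF bl] first that in auto)
  have rotating: "0 < c * det2 (dir i) (dir (Suc i))" if "1 \<le> i" "i < l" for i
    by (rule bend_directions_rotate[where P = "\<lambda>i. \<beta> (\<tau> i)" and \<tau> = \<tau> and s = s and j = j and m = ms])
      (use bends broken_line_segment[OF bl] leaving that in auto)
  have "rotating_steps l dir ms j c"
    using bends leaving rotating by unfold_locales (auto simp: c_def)
  then show thesis by (rule that)
qed

theorem lemma5p11:
  fixes l1 l2 :: nat
    and f :: "int \<times> int \<Rightarrow> 'k::field_char_0 ser"
    and d1 d2 a b k :: nat
  assumes "1 \<le> l1" and "1 \<le> l2"
    and "is_scat l1 l2 f"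
    and "coprime a b" and "1 \<le> k" and "0 < b" and "0 < d2"
    and "(real d1 / real d2 \<le> real (k * a * b + 1) / real (k * b ^ 2)
            \<and> real a / real b < real d1 / real d2)
         \<or> (real (k * a ^ 2) / real (k * a * b + 1) \<le> real d1 / real d2
            \<and> real d1 / real d2 < real a / real b)"
  shows "one_bending l1 l2 f d1 d2 a b k"
  unfolding one_bending_def
proof (intro allI impI, elim conjE)
  fix \<beta> l \<tau> ms cs
  assume bl: "broken_line l1 l2 f \<beta> l \<tau> ms cs" and m0: "ms 0 = (- int d1, - int d2)"
    and ml: "ms l = (int k * int a - int d1, int k * int b - int d2)"
    and off_axes: "\<forall>i. 1 \<le> i \<and> i \<le> l \<longrightarrow>
      \<not> ((snd (\<beta> (\<tau> i)) = 0 \<and> fst (\<beta> (\<tau> i)) > 0) \<or> (fst (\<beta> (\<tau> i)) = 0 \<and> snd (\<beta> (\<tau> i)) > 0))"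
  obtain dir j c where steps: "rotating_steps l dir ms j c"
    using broken_line_rotating_steps[OF assms(3) bl off_axes] .
  show "l = 1"
    by (rule rotating_steps.single_step[OF steps assms(5-8) m0]) (simp add: m0 ml)
qed

end
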